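(* Each of the following classes of matroids is closed under two-sums (i.e. if $\mathcal{L}$ and $\mathcal{M}$ belong to the class and the two-sum $\mathcal{L}\oplus_g\mathcal{M}$ is defined, then $\mathcal{L}\oplus_g\mathcal{M}$ belongs to the class): (a) $\mathbf{B}$-Rayleigh matroids; (b) $\mathbf{I}$-Rayleigh matroids; (c) $\mathbf{S}$-Rayleigh matroids; (d) Potts-Rayleigh matroids.
   Context: For a finite set $E$ and a multiaffine polynomial $Z$ in indeterminates $\mathbf{y}=\{y_e:e\in E\}$ with nonnegative coefficients, not identically zero, let $\Delta Z\{e,f\}=Z_eZ_f-Z_{ef}Z$ where subscripts denote partial derivatives; $Z$ is Rayleigh if $\Delta Z\{e,f\}(\mathbf{y})\ge0$ for all distinct $e,f\in E$ and all $\mathbf{y}$ with all $y_c>0$. For a family $\mathcal{Q}$ of subsets of $E$ let $Z(\mathcal{Q};\mathbf{y})=\sum_{S\in\mathcal{Q}}\prod_{e\in S}y_e$. For a matroid $\mathcal{M}$ on $E$, let $\mathbf{B}\mathcal{M},\mathbf{I}\mathcal{M},\mathbf{S}\mathcal{M}$ be its sets of bases, independent sets and spanning sets; $\mathcal{M}$ is $\mathbf{B}$-Rayleigh (resp. $\mathbf{I}$-, $\mathbf{S}$-Rayleigh) if $Z(\mathbf{B}\mathcal{M};\mathbf{y})$ (resp. $Z(\mathbf{I}\mathcal{M};\mathbf{y})$, $Z(\mathbf{S}\mathcal{M};\mathbf{y})$) is Rayleigh. The Potts model partition function is $Z(\mathcal{M},q;\mathbf{y})=\sum_{S\subseteq E}q^{-\mathrm{rank}_{\mathcal{M}}(S)}\mathbf{y}^S$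 for real $q>0$; $\mathcal{M}$ is Potts-Rayleigh if there is $q_*>0$ such that $Z(\mathcal{M},q;\mathbf{y})$ is Rayleigh for all $0<q\le q_*$. Two-sum: let $\mathcal{L},\mathcal{M}$ be matroids with $E(\mathcal{L})\cap E(\mathcal{M})=\{g\}$, $g$ neither a loop nor a coloop in $\mathcal{L}$ or in $\mathcal{M}$. Then $\mathcal{N}=\mathcal{L}\oplus_g\mathcal{M}$ is the matroid on $E(\mathcal{L})\cup E(\mathcal{M})\setminus\{g\}$ with rank function $\mathrm{rank}_{\mathcal{N}}(S)=\mathrm{rank}_{\mathcal{L}}(S\cap E(\mathcal{L}))+\mathrm{rank}_{\mathcal{M}}(S\cap E(\mathcal{M}))-\nu(S)$, where $\nu(S)=1$ if $g$ lies in the closure (in $\mathcal{L}$) of $S\cap E(\mathcal{L})$ and in the closure (in $\mathcal{M}$) of $S\cap E(\mathcal{M})$, and $\nu(S)=0$ otherwise. *)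

theory Defs
  imports Complex_Main
begin

text \<open>A matroid on the finite ground set E is given by its rank function r
(only values on subsets of E matter), satisfying the rank axioms.\<close>

definition matroid :: "'a set \<Rightarrow> ('a set \<Rightarrow> nat) \<Rightarrow> bool" where
  "matroid E r \<longleftrightarrow> finite E
     \<and> (\<forall>S. S \<subseteq> E \<longrightarrow> r S \<le> card S)
     \<and> (\<forall>S T. S \<subseteq> T \<and> T \<subseteq> E \<longrightarrow> r S \<le> r T)
     \<and> (\<forall>S T. S \<subseteq> E \<and> T \<subseteq> E \<longrightarrow> r (S \<union> T) + r (S \<inter> T) \<le> r S + r T)"

definition indeps :: "'a set \<Rightarrow> ('a set \<Rightarrow> nat) \<Rightarrow> 'a set set" where
  "indeps E r = {S. S \<subseteq> E \<and> r S = card S}"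

definition bases :: "'a set \<Rightarrow> ('a set \<Rightarrow> nat) \<Rightarrow> 'a set set" where
  "bases E r = {S. S \<subseteq> E \<and> r S = card S \<and> r S = r E}"

definition spannings :: "'a set \<Rightarrow> ('a set \<Rightarrow> nat) \<Rightarrow> 'a set set" where
  "spannings E r = {S. S \<subseteq> E \<and> r S = r E}"

definition closure_m :: "'a set \<Rightarrow> ('a set \<Rightarrow> nat) \<Rightarrow> 'a set \<Rightarrow> 'a set" where
  "closure_m E r S = {e \<in> E. r (insert e S) = r S}"

definition is_loop :: "'a set \<Rightarrow> ('a set \<Rightarrow> nat) \<Rightarrow> 'a \<Rightarrow> bool" where
  "is_loop E r g \<longleftrightarrow> g \<in> E \<and> r {g} = 0"

definition is_coloop :: "'a set \<Rightarrow> ('a set \<Rightarrow> nat) \<Rightarrow> 'a \<Rightarrow> bool" where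
  "is_coloop E r g \<longleftrightarrow> g \<in> E \<and> r (E - {g}) < r E"

text \<open>A multiaffine polynomial in the indeterminates y_e (e in E) is given by its
coefficient function c on subsets of E:  Z(y) = sum over S of c S * y^S.
Partial derivatives are the formal ones.\<close>

definition mpoly_eval :: "'a set \<Rightarrow> ('a set \<Rightarrow> real) \<Rightarrow> ('a \<Rightarrow> real) \<Rightarrow> real" where
  "mpoly_eval E c y = (\<Sum>S\<in>Pow E. c S * (\<Prod>e\<in>S. y e))"

definition mpoly_d1 :: "'a set \<Rightarrow> ('a set \<Rightarrow> real) \<Rightarrow> 'a \<Rightarrow> ('a \<Rightarrow> real) \<Rightarrow> real" where
  "mpoly_d1 E c e y = (\<Sum>S\<in>{S\<in>Pow E. e \<in> S}. c S * (\<Prod>x\<in>S - {e}. y x))"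

definition mpoly_d2 :: "'a set \<Rightarrow> ('a set \<Rightarrow> real) \<Rightarrow> 'a \<Rightarrow> 'a \<Rightarrow> ('a \<Rightarrow> real) \<Rightarrow> real" where
  "mpoly_d2 E c e f y = (\<Sum>S\<in>{S\<in>Pow E. e \<in> S \<and> f \<in> S}. c S * (\<Prod>x\<in>S - {e, f}. y x))"

definition rayleigh :: "'a set \<Rightarrow> ('a set \<Rightarrow> real) \<Rightarrow> bool" where
  "rayleigh E c \<longleftrightarrow>
     (\<forall>S\<subseteq>E. 0 \<le> c S) \<and> (\<exists>S\<subseteq>E. c S \<noteq> 0) \<and>
     (\<forall>e\<in>E. \<forall>f\<in>E. e \<noteq> f \<longrightarrow> (\<forall>y. (\<forall>x\<in>E. 0 < y x) \<longrightarrow>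
        0 \<le> mpoly_d1 E c e y * mpoly_d1 E c f y - mpoly_d2 E c e f y * mpoly_eval E c y))"

text \<open>Generating polynomial Z(Q;y) of a family Q of subsets.\<close>
definition family_coeff :: "'a set set \<Rightarrow> 'a set \<Rightarrow> real" where
  "family_coeff Q S = (if S \<in> Q then 1 else 0)"

definition B_rayleigh :: "'a set \<Rightarrow> ('a set \<Rightarrow> nat) \<Rightarrow> bool" where
  "B_rayleigh E r \<longleftrightarrow> matroid E r \<and> rayleigh E (family_coeff (bases E r))"

definition I_rayleigh :: "'a set \<Rightarrow> ('a set \<Rightarrow> nat) \<Rightarrow> bool" where
  "I_rayleigh E r \<longleftrightarrow> matroid E r \<and> rayleigh E (family_coeff (indeps E r))"

definition S_rayleigh :: "'a set \<Rightarrow> ('a set \<Rightarrow> nat) \<Rightarrow> bool" where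
  "S_rayleigh E r \<longleftrightarrow> matroid E r \<and> rayleigh E (family_coeff (spannings E r))"

definition potts_coeff :: "('a set \<Rightarrow> nat) \<Rightarrow> real \<Rightarrow> 'a set \<Rightarrow> real" where
  "potts_coeff r q S = q powr (- real (r S))"

definition potts_rayleigh :: "'a set \<Rightarrow> ('a set \<Rightarrow> nat) \<Rightarrow> bool" where
  "potts_rayleigh E r \<longleftrightarrow> matroid E r \<and>
     (\<exists>qs>0. \<forall>q. 0 < q \<and> q \<le> qs \<longrightarrow> rayleigh E (potts_coeff r q))"

definition two_sum_defined ::
  "'a set \<Rightarrow> ('a set \<Rightarrow> nat) \<Rightarrow> 'a set \<Rightarrow> ('a set \<Rightarrow> nat) \<Rightarrow> 'a \<Rightarrow> bool" where
  "two_sum_defined EL rL EM rM g \<longleftrightarrow> EL \<inter> EM = {g}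
     \<and> \<not> is_loop EL rL g \<and> \<not> is_coloop EL rL g
     \<and> \<not> is_loop EM rM g \<and> \<not> is_coloop EM rM g"

definition two_sum_ground :: "'a set \<Rightarrow> 'a set \<Rightarrow> 'a \<Rightarrow> 'a set" where
  "two_sum_ground EL EM g = (EL \<union> EM) - {g}"

definition two_sum_rank ::
  "'a set \<Rightarrow> ('a set \<Rightarrow> nat) \<Rightarrow> 'a set \<Rightarrow> ('a set \<Rightarrow> nat) \<Rightarrow> 'a \<Rightarrow> 'a set \<Rightarrow> nat" where
  "two_sum_rank EL rL EM rM g S =
     rL (S \<inter> EL) + rM (S \<inter> EM)
     - (if g \<in> closure_m EL rL (S \<inter> EL) \<and> g \<in> closure_m EM rM (S \<inter> EM) then 1 else 0)"

end

(*
  Split the generating polynomials of the summands at the common element g: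
  Z_L = P + y_g Q and Z_M = P' + y_g Q' with P, Q, P', Q' free of y_g.  In all four
  cases the polynomial of the two-sum is  k (P Q' + Q P' - alpha P P' - gamma Q Q'),
  with (k, alpha, gamma) = (1, 0, 0) for bases, (1, 0, 1) for independent sets,
  (1, 1, 0) for spanning sets and (q/(1-q), 1, q) for the Potts model; the
  coefficients c of each summand satisfy alpha c(S) <= c(S + g), gamma c(S + g) <= c(S),
  and alpha gamma <= 1.

  For e, f on the same side, say in L, the two-sum is k (P X + Q W) with X, W >= 0,
  i.e. k X Z_L evaluated at y_g = W/X, so its Rayleigh differences are k^2 X^2 times
  those of Z_L (the boundary X = 0 or W = 0 follows by continuity).  For e in L and f in M
  the Rayleigh difference factors as k^2 (1 - alpha gamma) (P_e Q - Q_e P) (P'_f Q' - Q'_f P'),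
  and the two last factors are the Rayleigh differences of Z_L at {e, g} and of Z_M at
  {f, g}.
*)

theory Submission
  imports Defs
begin

section \<open>Mixed partial derivatives of multiaffine polynomials\<close>

definition mpoly_deriv :: "'a set \<Rightarrow> ('a set \<Rightarrow> real) \<Rightarrow> 'a set \<Rightarrow> ('a \<Rightarrow> real) \<Rightarrow> real" where
  "mpoly_deriv E c R y = (\<Sum>S\<in>Pow E. if R \<subseteq> S then c S * (\<Prod>x\<in>S - R. y x) else 0)"

definition rayleigh_delta :: "'a set \<Rightarrow> ('a set \<Rightarrow> real) \<Rightarrow> 'a \<Rightarrow> 'a \<Rightarrow> ('a \<Rightarrow> real) \<Rightarrow> real" where
  "rayleigh_delta E c e f y =
     mpoly_deriv E c {e} y * mpoly_deriv E c {f} y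
   - mpoly_deriv E c {e, f} y * mpoly_deriv E c {} y"

lemma rayleigh_delta_commute: "rayleigh_delta E c e f y = rayleigh_delta E c f e y"
  by (simp add: rayleigh_delta_def insert_commute)

lemma mpoly_eval_eq_deriv: "mpoly_eval E c y = mpoly_deriv E c {} y"
  by (simp add: mpoly_eval_def mpoly_deriv_def)

lemma mpoly_d1_eq_deriv: "finite E \<Longrightarrow> mpoly_d1 E c e y = mpoly_deriv E c {e} y"
  unfolding mpoly_d1_def mpoly_deriv_def by (subst sum.inter_filter) auto

lemma mpoly_d2_eq_deriv: "finite E \<Longrightarrow> mpoly_d2 E c e f y = mpoly_deriv E c {e, f} y"
  unfolding mpoly_d2_def mpoly_deriv_def by (subst sum.inter_filter) auto

lemma rayleigh_iff_delta:
  assumes "finite E"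
  shows "rayleigh E c \<longleftrightarrow> (\<forall>S\<subseteq>E. 0 \<le> c S) \<and> (\<exists>S\<subseteq>E. c S \<noteq> 0) \<and>
     (\<forall>e\<in>E. \<forall>f\<in>E. e \<noteq> f \<longrightarrow> (\<forall>y. (\<forall>x\<in>E. 0 < y x) \<longrightarrow> 0 \<le> rayleigh_delta E c e f y))"
  by (simp add: rayleigh_def rayleigh_delta_def mpoly_eval_eq_deriv
      mpoly_d1_eq_deriv[OF assms] mpoly_d2_eq_deriv[OF assms])

lemma rayleigh_cong:
  assumes "\<And>S. S \<subseteq> E \<Longrightarrow> c S = c' S"
  shows "rayleigh E c \<longleftrightarrow> rayleigh E c'"
proof -
  have "mpoly_eval E c = mpoly_eval E c'" "mpoly_d1 E c = mpoly_d1 E c'"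
    "mpoly_d2 E c = mpoly_d2 E c'"
    using assms by (auto simp: fun_eq_iff mpoly_eval_def mpoly_d1_def mpoly_d2_def intro!: sum.cong)
  then show ?thesis
    using assms unfolding rayleigh_def by auto
qed

lemma mpoly_deriv_add:
  "mpoly_deriv E (\<lambda>S. c S + c' S) R y = mpoly_deriv E c R y + mpoly_deriv E c' R y"
  unfolding mpoly_deriv_def sum.distrib[symmetric] by (rule sum.cong) (auto simp: algebra_simps)

lemma mpoly_deriv_diff:
  "mpoly_deriv E (\<lambda>S. c S - c' S) R y = mpoly_deriv E c R y - mpoly_deriv E c' R y"
  unfolding mpoly_deriv_def sum_subtractf[symmetric] by (rule sum.cong) (auto simp: algebra_simps)

lemma mpoly_deriv_scale: "mpoly_deriv E (\<lambda>S. k * c S) R y = k * mpoly_deriv E c R y"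
  unfolding mpoly_deriv_def sum_distrib_left by (rule sum.cong) (auto simp: algebra_simps)

lemma mpoly_deriv_nonneg:
  "(\<And>S. S \<subseteq> E \<Longrightarrow> 0 \<le> c S) \<Longrightarrow> (\<And>x. x \<in> E \<Longrightarrow> 0 \<le> y x) \<Longrightarrow> 0 \<le> mpoly_deriv E c R y"
  unfolding mpoly_deriv_def by (intro sum_nonneg) (auto intro!: mult_nonneg_nonneg prod_nonneg)

lemma mpoly_deriv_fun_upd: "g \<notin> E \<Longrightarrow> mpoly_deriv E c R (y(g := t)) = mpoly_deriv E c R y"
  unfolding mpoly_deriv_def
  by (intro sum.cong refl if_cong arg_cong[where f="\<lambda>u. c _ * u"] prod.cong) auto

lemma mpoly_deriv_insert:
  assumes "finite A" "g \<notin> A" "R \<subseteq> A"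
  shows "mpoly_deriv (insert g A) c R y
      = mpoly_deriv A c R y + y g * mpoly_deriv A (\<lambda>S. c (insert g S)) R y"
    and "mpoly_deriv (insert g A) c (insert g R) y = mpoly_deriv A (\<lambda>S. c (insert g S)) R y"
proof -
  have fin: "finite S" if "S \<in> Pow A" for S
    using that assms(1) finite_subset by blast
  have inj: "inj_on (insert g) (Pow A)"
    using assms(2) by (auto simp: inj_on_def insert_ident)
  have split: "mpoly_deriv (insert g A) c R' y = mpoly_deriv A c R' y +
      (\<Sum>S\<in>Pow A. if R' \<subseteq> insert g S then c (insert g S) * (\<Prod>x\<in>insert g S - R'. y x) else 0)" for R'
    unfolding mpoly_deriv_def Pow_insert
    by (subst sum.union_disjoint) (use assms in \<open>auto simp: sum.reindex[OF inj]\<close>)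
  have "(\<Sum>S\<in>Pow A. if R \<subseteq> insert g S then c (insert g S) * (\<Prod>x\<in>insert g S - R. y x) else 0)
      = y g * mpoly_deriv A (\<lambda>S. c (insert g S)) R y"
    unfolding mpoly_deriv_def sum_distrib_left
  proof (rule sum.cong[OF refl])
    fix S assume S: "S \<in> Pow A"
    then have "insert g S - R = insert g (S - R)" "g \<notin> S - R" "R \<subseteq> insert g S \<longleftrightarrow> R \<subseteq> S"
      using assms by auto
    then show "(if R \<subseteq> insert g S then c (insert g S) * (\<Prod>x\<in>insert g S - R. y x) else 0) =
        y g * (if R \<subseteq> S then c (insert g S) * (\<Prod>x\<in>S - R. y x) else 0)"
      using fin[OF S] by simp
  qed
  then show "mpoly_deriv (insert g A) c R y
      = mpoly_deriv A c R y + y g * mpoly_deriv A (\<lambda>S. c (insert g S)) R y"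
    unfolding split by simp
  have "(\<Sum>S\<in>Pow A. if insert g R \<subseteq> insert g S
        then c (insert g S) * (\<Prod>x\<in>insert g S - insert g R. y x) else 0)
      = mpoly_deriv A (\<lambda>S. c (insert g S)) R y"
    unfolding mpoly_deriv_def
  proof (rule sum.cong[OF refl])
    fix S assume "S \<in> Pow A"
    then have "insert g S - insert g R = S - R" "insert g R \<subseteq> insert g S \<longleftrightarrow> R \<subseteq> S"
      using assms by auto
    then show "(if insert g R \<subseteq> insert g S
          then c (insert g S) * (\<Prod>x\<in>insert g S - insert g R. y x) else 0)
        = (if R \<subseteq> S then c (insert g S) * (\<Prod>x\<in>S - R. y x) else 0)"
      by simp
  qed
  moreover have "mpoly_deriv A c (insert g R) y = 0"
    unfolding mpoly_deriv_def using assms by (intro sum.neutral) auto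
  ultimately show
    "mpoly_deriv (insert g A) c (insert g R) y = mpoly_deriv A (\<lambda>S. c (insert g S)) R y"
    unfolding split by linarith
qed

lemma sum_Pow_Un_product:
  fixes F G :: "'a set \<Rightarrow> real"
  assumes "finite A" "finite B" "A \<inter> B = {}"
  shows "(\<Sum>S\<in>Pow (A \<union> B). F (S \<inter> A) * G (S \<inter> B)) = (\<Sum>S\<in>Pow A. F S) * (\<Sum>S\<in>Pow B. G S)"
proof -
  have bij: "bij_betw (\<lambda>S. (S \<inter> A, S \<inter> B)) (Pow (A \<union> B)) (Pow A \<times> Pow B)"
    by (rule bij_betw_byWitness[where f'="\<lambda>(S1, S2). S1 \<union> S2"]) (use assms in auto)
  have "(\<Sum>S\<in>Pow (A \<union> B). F (S \<inter> A) * G (S \<inter> B)) = (\<Sum>(S1, S2)\<in>Pow A \<times> Pow B. F S1 * G S2)"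
    using sum.reindex_bij_betw[OF bij, of "\<lambda>(S1, S2). F S1 * G S2"] by simp
  then show ?thesis
    by (simp add: sum.cartesian_product' sum_product)
qed

lemma mpoly_deriv_product:
  assumes "finite A" "finite B" "A \<inter> B = {}" "R1 \<subseteq> A" "R2 \<subseteq> B"
  shows "mpoly_deriv (A \<union> B) (\<lambda>S. a (S \<inter> A) * b (S \<inter> B)) (R1 \<union> R2) y
       = mpoly_deriv A a R1 y * mpoly_deriv B b R2 y"
  unfolding mpoly_deriv_def sum_Pow_Un_product[OF assms(1-3), symmetric]
proof (rule sum.cong[OF refl])
  fix S assume S: "S \<in> Pow (A \<union> B)"
  have fin: "finite S" using S assms(1,2) by (meson PowD finite_Un finite_subset)
  have "S - (R1 \<union> R2) = (S \<inter> A - R1) \<union> (S \<inter> B - R2)" using S assms by auto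
  then have "(\<Prod>x\<in>S - (R1 \<union> R2). y x) = (\<Prod>x\<in>S \<inter> A - R1. y x) * (\<Prod>x\<in>S \<inter> B - R2. y x)"
    using fin assms(3) by (simp add: prod.union_disjoint disjoint_iff)
  moreover have "R1 \<union> R2 \<subseteq> S \<longleftrightarrow> R1 \<subseteq> S \<inter> A \<and> R2 \<subseteq> S \<inter> B" using assms by auto
  ultimately show "(if R1 \<union> R2 \<subseteq> S then a (S \<inter> A) * b (S \<inter> B) * (\<Prod>x\<in>S - (R1 \<union> R2). y x) else 0) =
      (if R1 \<subseteq> S \<inter> A then a (S \<inter> A) * (\<Prod>x\<in>S \<inter> A - R1. y x) else 0) *
      (if R2 \<subseteq> S \<inter> B then b (S \<inter> B) * (\<Prod>x\<in>S \<inter> B - R2. y x) else 0)"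
    by simp
qed

section \<open>Rayleigh property of the two-sum polynomial\<close>

definition two_sum_form :: "real \<Rightarrow> real \<Rightarrow> real \<Rightarrow> real \<Rightarrow> real \<Rightarrow> real \<Rightarrow> real \<Rightarrow> real" where
  "two_sum_form k \<alpha> \<gamma> P Q P' Q' = k * (P * Q' + Q * P' - \<alpha> * (P * P') - \<gamma> * (Q * Q'))"

definition two_sum_coeff :: "'a set \<Rightarrow> 'a set \<Rightarrow> 'a \<Rightarrow> real \<Rightarrow> real \<Rightarrow> real \<Rightarrow>
    ('a set \<Rightarrow> real) \<Rightarrow> ('a set \<Rightarrow> real) \<Rightarrow> 'a set \<Rightarrow> real" where
  "two_sum_coeff A B g k \<alpha> \<gamma> cL cM S =
     two_sum_form k \<alpha> \<gamma> (cL (S \<inter> A)) (cL (insert g (S \<inter> A))) (cM (S \<inter> B)) (cM (insert g (S \<inter> B)))"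

lemma two_sum_form_regroup:
  "two_sum_form k \<alpha> \<gamma> P Q P' Q' = k * (P * (Q' - \<alpha> * P') + Q * (P' - \<gamma> * Q'))"
  by (simp add: two_sum_form_def algebra_simps)

lemma two_sum_coeff_swap: "two_sum_coeff A B g k \<alpha> \<gamma> cL cM = two_sum_coeff B A g k \<alpha> \<gamma> cM cL"
  by (simp add: fun_eq_iff two_sum_coeff_def two_sum_form_def algebra_simps)

lemma two_sum_form_delta:
  "two_sum_form k \<alpha> \<gamma> Pe Qe P' Q' * two_sum_form k \<alpha> \<gamma> P Q Pf' Qf'
     - two_sum_form k \<alpha> \<gamma> Pe Qe Pf' Qf' * two_sum_form k \<alpha> \<gamma> P Q P' Q'
   = k\<^sup>2 * (1 - \<alpha> * \<gamma>) * ((Pe * Q - Qe * P) * (Pf' * Q' - Qf' * P'))"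
  by (simp add: two_sum_form_def algebra_simps power2_eq_square)

lemma mpoly_deriv_two_sum_coeff:
  assumes "finite A" "finite B" "A \<inter> B = {}" "R1 \<subseteq> A" "R2 \<subseteq> B"
  shows "mpoly_deriv (A \<union> B) (two_sum_coeff A B g k \<alpha> \<gamma> cL cM) (R1 \<union> R2) y =
    two_sum_form k \<alpha> \<gamma> (mpoly_deriv A cL R1 y) (mpoly_deriv A (\<lambda>S. cL (insert g S)) R1 y)
      (mpoly_deriv B cM R2 y) (mpoly_deriv B (\<lambda>S. cM (insert g S)) R2 y)"
  using mpoly_deriv_product[OF assms, of cL "\<lambda>S. cM (insert g S)"]
    mpoly_deriv_product[OF assms, of "\<lambda>S. cL (insert g S)" cM]
    mpoly_deriv_product[OF assms, of cL cM]
    mpoly_deriv_product[OF assms, of "\<lambda>S. cL (insert g S)" "\<lambda>S. cM (insert g S)"]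
  by (simp add: two_sum_coeff_def[abs_def] two_sum_form_def
      mpoly_deriv_scale mpoly_deriv_add mpoly_deriv_diff)

lemma quadratic_delta_homogenize:
  fixes a1 b1 a2 b2 a3 b3 a4 b4 X W :: real
  assumes "\<And>t. 0 < t \<Longrightarrow> 0 \<le> (a1 + t * b1) * (a2 + t * b2) - (a3 + t * b3) * (a4 + t * b4)"
    and "0 \<le> X" "0 \<le> W"
  shows "0 \<le> (a1 * X + b1 * W) * (a2 * X + b2 * W) - (a3 * X + b3 * W) * (a4 * X + b4 * W)"
proof -
  define F where
    "F X W = (a1 * X + b1 * W) * (a2 * X + b2 * W) - (a3 * X + b3 * W) * (a4 * X + b4 * W)"
    for X W :: real
  have interior: "0 \<le> F X' W'" if "0 < X'" "0 < W'" for X' W'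
  proof -
    have "F X' W' = X'\<^sup>2 *
        ((a1 + W'/X' * b1) * (a2 + W'/X' * b2) - (a3 + W'/X' * b3) * (a4 + W'/X' * b4))"
      using that by (simp add: F_def field_simps power2_eq_square)
    then show ?thesis
      using assms(1)[of "W'/X'"] that by simp
  qed
  have "((\<lambda>\<epsilon>. F (X + \<epsilon>) (W + \<epsilon>)) \<longlongrightarrow> F X W) (at_right 0)"
    unfolding F_def by (intro tendsto_eq_intros) auto
  moreover have "\<forall>\<^sub>F \<epsilon> in at_right 0. 0 \<le> F (X + \<epsilon>) (W + \<epsilon>)"
    using eventually_at_right_less by (rule eventually_mono) (use assms interior in auto)
  ultimately have "0 \<le> F X W"
    by (rule tendsto_lowerbound) simp
  then show ?thesis
    by (simp add: F_def)
qed

text \<open>For \<open>Z = P + y\<^sub>g Q\<close> the difference \<open>\<Delta>Z{e,g} = P\<^sub>e Q - Q\<^sub>e P\<close>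
  does not depend on \<open>y\<^sub>g\<close>.\<close>

lemma rayleigh_delta_pivot:
  assumes "rayleigh (insert g A) c" "finite A" "g \<notin> A" "e \<in> A" "\<forall>x\<in>A. 0 < y x"
  shows "0 \<le> mpoly_deriv A c {e} y * mpoly_deriv A (\<lambda>S. c (insert g S)) {} y
           - mpoly_deriv A (\<lambda>S. c (insert g S)) {e} y * mpoly_deriv A c {} y"
proof -
  have "0 \<le> rayleigh_delta (insert g A) c e g (y(g := 1))"
    using assms by (auto simp: rayleigh_iff_delta)
  moreover have "{e, g} = insert g {e}"
    by auto
  ultimately show ?thesis
    using assms(4)
    by (simp add: rayleigh_delta_def mpoly_deriv_insert[OF assms(2,3)]
        mpoly_deriv_fun_upd[OF assms(3)] algebra_simps)
qed

lemma rayleigh_delta_two_sum_same_side: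
  assumes fin: "finite A" "finite B" and disj: "A \<inter> B = {}" and gA: "g \<notin> A"
    and RL: "rayleigh (insert g A) cL"
    and cM_bounds: "\<And>S. S \<subseteq> B \<Longrightarrow> \<alpha> * cM S \<le> cM (insert g S) \<and> \<gamma> * cM (insert g S) \<le> cM S"
    and ef: "e \<in> A" "f \<in> A" "e \<noteq> f" and ypos: "\<forall>x\<in>A \<union> B. 0 < y x"
  shows "0 \<le> rayleigh_delta (A \<union> B) (two_sum_coeff A B g k \<alpha> \<gamma> cL cM) e f y"
proof -
  define P where "P R = mpoly_deriv A cL R y" for R
  define Q where "Q R = mpoly_deriv A (\<lambda>S. cL (insert g S)) R y" for R
  define X where "X = mpoly_deriv B (\<lambda>S. cM (insert g S) - \<alpha> * cM S) {} y"
  define W where "W = mpoly_deriv B (\<lambda>S. cM S - \<gamma> * cM (insert g S)) {} y"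
  have deriv: "mpoly_deriv (A \<union> B) (two_sum_coeff A B g k \<alpha> \<gamma> cL cM) R y = k * (P R * X + Q R * W)"
    if "R \<subseteq> A" for R
    using mpoly_deriv_two_sum_coeff[OF fin disj that empty_subsetI]
    by (simp add: two_sum_form_regroup P_def Q_def X_def W_def mpoly_deriv_diff mpoly_deriv_scale)
  have "0 \<le> X" "0 \<le> W"
    unfolding X_def W_def using cM_bounds ypos
    by (auto intro!: mpoly_deriv_nonneg simp: less_imp_le)
  moreover have "0 \<le> (P {e} + t * Q {e}) * (P {f} + t * Q {f})
      - (P {e, f} + t * Q {e, f}) * (P {} + t * Q {})" if "0 < t" for t
  proof -
    have "0 \<le> rayleigh_delta (insert g A) cL e f (y(g := t))"
      using RL ef ypos that by (auto simp: rayleigh_iff_delta fin)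
    then show ?thesis
      using ef
      by (simp add: rayleigh_delta_def mpoly_deriv_insert[OF fin(1) gA] mpoly_deriv_fun_upd[OF gA]
          P_def Q_def)
  qed
  ultimately have "0 \<le> (P {e} * X + Q {e} * W) * (P {f} * X + Q {f} * W)
      - (P {e, f} * X + Q {e, f} * W) * (P {} * X + Q {} * W)"
    by (intro quadratic_delta_homogenize)
  then have "0 \<le> k\<^sup>2 * ((P {e} * X + Q {e} * W) * (P {f} * X + Q {f} * W)
      - (P {e, f} * X + Q {e, f} * W) * (P {} * X + Q {} * W))"
    by simp
  then show ?thesis
    using ef by (simp add: rayleigh_delta_def deriv power2_eq_square algebra_simps)
qed

lemma rayleigh_delta_two_sum_cross:
  assumes fin: "finite A" "finite B" and disj: "A \<inter> B = {}" and g: "g \<notin> A" "g \<notin> B"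
    and RL: "rayleigh (insert g A) cL" and RM: "rayleigh (insert g B) cM" and "\<alpha> * \<gamma> \<le> 1"
    and e: "e \<in> A" and f: "f \<in> B" and ypos: "\<forall>x\<in>A \<union> B. 0 < y x"
  shows "0 \<le> rayleigh_delta (A \<union> B) (two_sum_coeff A B g k \<alpha> \<gamma> cL cM) e f y"
proof -
  note deriv = mpoly_deriv_two_sum_coeff[OF fin disj]
  have "rayleigh_delta (A \<union> B) (two_sum_coeff A B g k \<alpha> \<gamma> cL cM) e f y
    = k\<^sup>2 * (1 - \<alpha> * \<gamma>)
      * ((mpoly_deriv A cL {e} y * mpoly_deriv A (\<lambda>S. cL (insert g S)) {} y
          - mpoly_deriv A (\<lambda>S. cL (insert g S)) {e} y * mpoly_deriv A cL {} y)
       * (mpoly_deriv B cM {f} y * mpoly_deriv B (\<lambda>S. cM (insert g S)) {} y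
          - mpoly_deriv B (\<lambda>S. cM (insert g S)) {f} y * mpoly_deriv B cM {} y))"
    using deriv[of "{e}" "{}"] deriv[of "{}" "{f}"] deriv[of "{e}" "{f}", folded insert_is_Un]
      deriv[of "{}" "{}"] e f
    by (simp add: rayleigh_delta_def two_sum_form_delta)
  moreover have "0 \<le> mpoly_deriv A cL {e} y * mpoly_deriv A (\<lambda>S. cL (insert g S)) {} y
          - mpoly_deriv A (\<lambda>S. cL (insert g S)) {e} y * mpoly_deriv A cL {} y"
    using rayleigh_delta_pivot[OF RL fin(1) g(1) e] ypos by simp
  moreover have "0 \<le> mpoly_deriv B cM {f} y * mpoly_deriv B (\<lambda>S. cM (insert g S)) {} y
          - mpoly_deriv B (\<lambda>S. cM (insert g S)) {f} y * mpoly_deriv B cM {} y"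
    using rayleigh_delta_pivot[OF RM fin(2) g(2) f] ypos by simp
  ultimately show ?thesis
    using \<open>\<alpha> * \<gamma> \<le> 1\<close> by simp
qed

lemma rayleigh_two_sum_coeff:
  assumes fin: "finite A" "finite B" and disj: "A \<inter> B = {}" and g: "g \<notin> A" "g \<notin> B"
    and RL: "rayleigh (insert g A) cL" and RM: "rayleigh (insert g B) cM"
    and cL_bounds: "\<And>S. S \<subseteq> A \<Longrightarrow> \<alpha> * cL S \<le> cL (insert g S) \<and> \<gamma> * cL (insert g S) \<le> cL S"
    and cM_bounds: "\<And>S. S \<subseteq> B \<Longrightarrow> \<alpha> * cM S \<le> cM (insert g S) \<and> \<gamma> * cM (insert g S) \<le> cM S"
    and \<alpha>\<gamma>: "\<alpha> * \<gamma> \<le> 1" and k: "0 \<le> k"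
    and nonzero: "\<exists>S\<subseteq>A \<union> B. two_sum_coeff A B g k \<alpha> \<gamma> cL cM S \<noteq> 0"
  shows "rayleigh (A \<union> B) (two_sum_coeff A B g k \<alpha> \<gamma> cL cM)"
  unfolding rayleigh_iff_delta[OF finite_UnI[OF fin]]
proof (intro conjI ballI allI impI nonzero)
  fix S assume "S \<subseteq> A \<union> B"
  have cL_nonneg: "0 \<le> cL T" if "T \<subseteq> insert g A" for T
    using RL that by (simp add: rayleigh_def)
  have "0 \<le> cL (S \<inter> A)" "0 \<le> cL (insert g (S \<inter> A))"
    by (rule cL_nonneg, blast)+
  then show "0 \<le> two_sum_coeff A B g k \<alpha> \<gamma> cL cM S"
    using cM_bounds[of "S \<inter> B"] k
    by (auto simp: two_sum_coeff_def two_sum_form_regroup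
        intro!: mult_nonneg_nonneg add_nonneg_nonneg)
next
  fix e f and y :: "'a \<Rightarrow> real"
  assume ef: "e \<in> A \<union> B" "f \<in> A \<union> B" "e \<noteq> f" and ypos: "\<forall>x\<in>A \<union> B. 0 < y x"
  consider "e \<in> A" "f \<in> A" | "e \<in> A" "f \<in> B" | "e \<in> B" "f \<in> A" | "e \<in> B" "f \<in> B"
    using ef by auto
  then show "0 \<le> rayleigh_delta (A \<union> B) (two_sum_coeff A B g k \<alpha> \<gamma> cL cM) e f y"
  proof cases
    case 1
    show ?thesis
      by (rule rayleigh_delta_two_sum_same_side[where cM = cM,
            OF fin disj g(1) RL cM_bounds 1 ef(3) ypos])
  next
    case 2
    show ?thesis
      by (rule rayleigh_delta_two_sum_cross[OF fin disj g RL RM \<alpha>\<gamma> 2 ypos])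
  next
    case 3
    show ?thesis
      unfolding rayleigh_delta_commute[of _ _ e]
      by (rule rayleigh_delta_two_sum_cross[OF fin disj g RL RM \<alpha>\<gamma> 3(2,1) ypos])
  next
    case 4
    have "0 \<le> rayleigh_delta (B \<union> A) (two_sum_coeff B A g k \<alpha> \<gamma> cM cL) e f y"
      using ypos
      by (intro rayleigh_delta_two_sum_same_side[where cM = cL,
            OF fin(2,1) _ g(2) RM cL_bounds 4 ef(3)])
        (auto simp: disj Int_commute)
    then show ?thesis
      by (simp add: two_sum_coeff_swap Un_commute)
  qed
qed

section \<open>Matroid rank functions\<close>

lemma matroid_finite: "matroid E r \<Longrightarrow> finite E"
  unfolding matroid_def by blast

lemma matroid_rank_le_card: "matroid E r \<Longrightarrow> S \<subseteq> E \<Longrightarrow> r S \<le> card S"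
  unfolding matroid_def by blast

lemma matroid_rank_mono: "matroid E r \<Longrightarrow> S \<subseteq> T \<Longrightarrow> T \<subseteq> E \<Longrightarrow> r S \<le> r T"
  unfolding matroid_def by blast

lemma matroid_rank_submod:
  "matroid E r \<Longrightarrow> S \<subseteq> E \<Longrightarrow> T \<subseteq> E \<Longrightarrow> r (S \<union> T) + r (S \<inter> T) \<le> r S + r T"
  unfolding matroid_def by blast

lemma matroid_rank_empty: "matroid E r \<Longrightarrow> r {} = 0"
  using matroid_rank_le_card[of E r "{}"] by simp

lemma matroid_rank_insert:
  assumes M: "matroid E r" and "S \<subseteq> E" "e \<in> E"
  shows "r (insert e S) = r S \<or> r (insert e S) = Suc (r S)"
proof (cases "e \<in> S")
  case False
  have "r (S \<union> {e}) + r (S \<inter> {e}) \<le> r S + r {e}"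
    using assms by (intro matroid_rank_submod) auto
  moreover have "r {e} \<le> 1" "r S \<le> r (insert e S)"
    using assms matroid_rank_le_card[OF M, of "{e}"] matroid_rank_mono[OF M, of S "insert e S"]
    by auto
  ultimately show ?thesis
    using False matroid_rank_empty[OF M] by auto
qed (simp add: insert_absorb)

lemma matroid_rank_insert_eq_mono:
  assumes M: "matroid E r" and "S \<subseteq> T" "T \<subseteq> E" "e \<in> E" and "r (insert e S) = r S"
  shows "r (insert e T) = r T"
proof (cases "e \<in> T")
  case False
  have "r (insert e S \<union> T) + r (insert e S \<inter> T) \<le> r (insert e S) + r T"
    using assms by (intro matroid_rank_submod) auto
  moreover have "insert e S \<union> T = insert e T" "insert e S \<inter> T = S"
    using False assms by auto
  moreover have "r T \<le> r (insert e T)"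
    using matroid_rank_mono[OF M, of T "insert e T"] assms by auto
  ultimately show ?thesis
    using assms by auto
qed (simp add: insert_absorb)

lemma matroid_maximal_indep_subset:
  assumes M: "matroid E r" and "D \<subseteq> E"
  shows "\<exists>J\<subseteq>D. r J = card J \<and> r J = r D"
  using finite_subset[OF assms(2) matroid_finite[OF M]] assms(2)
proof (induction D rule: finite_induct)
  case empty
  then show ?case
    using matroid_rank_empty[OF M] by auto
next
  case (insert a D)
  then obtain J where J: "J \<subseteq> D" "r J = card J" "r J = r D"
    by auto
  show ?case
  proof (cases "r (insert a D) = r D")
    case True
    then show ?thesis
      using J by auto
  next
    case False
    then have up: "r (insert a D) = Suc (r D)"
      using matroid_rank_insert[OF M, of D a] insert.prems by auto
    have "a \<notin> J" "finite J"
      using J insert.hyps finite_subset by auto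
    have "r (insert a J \<union> D) + r (insert a J \<inter> D) \<le> r (insert a J) + r D"
      using J insert.prems by (intro matroid_rank_submod[OF M]) auto
    moreover have "insert a J \<union> D = insert a D" "insert a J \<inter> D = J"
      using J \<open>a \<notin> D\<close> by auto
    moreover have "r (insert a J) \<le> card (insert a J)"
      using J insert.prems by (intro matroid_rank_le_card[OF M]) auto
    ultimately have "r (insert a J) = card (insert a J) \<and> r (insert a J) = r (insert a D)"
      using J up \<open>a \<notin> J\<close> \<open>finite J\<close> by simp
    then show ?thesis
      using J by (intro exI[of _ "insert a J"]) auto
  qed
qed

lemma matroid_bases_nonempty: "matroid E r \<Longrightarrow> bases E r \<noteq> {}"
  using matroid_maximal_indep_subset[of E r E] by (auto simp: bases_def)

lemma matroid_cong:
  assumes M: "matroid E r" and eq: "\<And>S. S \<subseteq> E \<Longrightarrow> r S = r' S"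
  shows "matroid E r'"
  unfolding matroid_def
proof (intro conjI allI impI)
  show "finite E"
    using matroid_finite[OF M] .
  show "r' S \<le> card S" if "S \<subseteq> E" for S
    using matroid_rank_le_card[OF M that] eq[OF that] by simp
  show "r' S \<le> r' T" if "S \<subseteq> T \<and> T \<subseteq> E" for S T
    using matroid_rank_mono[OF M] eq that by (metis order_trans)
  show "r' (S \<union> T) + r' (S \<inter> T) \<le> r' S + r' T" if "S \<subseteq> E \<and> T \<subseteq> E" for S T
    using matroid_rank_submod[OF M] eq that by (metis Un_subset_iff le_infI1)
qed

lemma matroid_rank_insert_nonloop:
  assumes M: "matroid (insert g A) r" and "r {g} \<noteq> 0" "g \<notin> A" "T \<subseteq> A"
  shows "r (insert g T) = r T \<or> r (insert g T) = Suc (r T)" and "1 \<le> r (insert g T)"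
    and "r T \<le> card T" and "r (insert g T) \<le> r (insert g A)" and "card (insert g T) = Suc (card T)"
proof -
  show "r (insert g T) = r T \<or> r (insert g T) = Suc (r T)"
    using assms by (intro matroid_rank_insert[OF M]) auto
  have "r {g} \<le> r (insert g T)"
    using assms by (intro matroid_rank_mono[OF M]) auto
  then show "1 \<le> r (insert g T)"
    using assms(2) by linarith
  show "r T \<le> card T" "r (insert g T) \<le> r (insert g A)"
    using assms by (auto intro: matroid_rank_le_card[OF M] matroid_rank_mono[OF M])
  have "finite T" "g \<notin> T"
    using assms finite_subset[OF _ matroid_finite[OF M], of T] by blast+
  then show "card (insert g T) = Suc (card T)"
    by simp
qed

lemma matroid_indeps_insertD:
  assumes M: "matroid E r" and "insert e T \<in> indeps E r" "e \<notin> T"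
  shows "T \<in> indeps E r"
proof -
  have "T \<subseteq> E" "e \<in> E" "finite T"
    using assms finite_subset[OF _ matroid_finite[OF M]] by (auto simp: indeps_def)
  then show ?thesis
    using assms matroid_rank_insert[OF M, of T e] matroid_rank_le_card[OF M, of T]
    by (auto simp: indeps_def)
qed

lemma matroid_spannings_insertI:
  assumes M: "matroid E r" and "T \<in> spannings E r" "e \<in> E"
  shows "insert e T \<in> spannings E r"
proof -
  have "insert e T \<subseteq> E" "r T = r E"
    using assms by (simp_all add: spannings_def)
  moreover have "r T \<le> r (insert e T)" "r (insert e T) \<le> r E"
    using \<open>insert e T \<subseteq> E\<close> by (auto intro: matroid_rank_mono[OF M])
  ultimately show ?thesis
    by (simp add: spannings_def)
qed

lemma family_coeff_nonneg: "0 \<le> family_coeff Q S"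
  by (simp add: family_coeff_def)

lemma indeps_coeff_insert_le:
  "matroid E r \<Longrightarrow> e \<notin> T \<Longrightarrow> family_coeff (indeps E r) (insert e T) \<le> family_coeff (indeps E r) T"
  using matroid_indeps_insertD by (fastforce simp: family_coeff_def)

lemma spannings_coeff_insert_ge:
  "matroid E r \<Longrightarrow> e \<in> E \<Longrightarrow> family_coeff (spannings E r) T \<le> family_coeff (spannings E r) (insert e T)"
  using matroid_spannings_insertI by (fastforce simp: family_coeff_def)

lemma potts_coeff_insert:
  assumes "0 < q" "r (insert e T) = r T \<or> r (insert e T) = Suc (r T)"
  shows "potts_coeff r q (insert e T)
      = potts_coeff r q T * (if r (insert e T) = r T then 1 else 1 / q)"
proof (cases "r (insert e T) = r T")
  case False
  then have "r (insert e T) = Suc (r T)"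
    using assms(2) by simp
  moreover have "q powr (- real (Suc n)) = q powr (- real n) / q" for n
  proof -
    have "q powr (- real (Suc n)) = q powr (- real n - 1)"
      by (rule arg_cong[where f = "\<lambda>x. q powr x"]) simp
    also have "\<dots> = q powr (- real n) / q"
      using assms(1) by (simp add: powr_diff)
    finally show ?thesis .
  qed
  ultimately show ?thesis
    by (simp add: potts_coeff_def)
qed (simp add: potts_coeff_def)

lemma potts_coeff_insert_bounds:
  assumes "0 < q" "q \<le> 1" "r (insert e T) = r T \<or> r (insert e T) = Suc (r T)"
  shows "potts_coeff r q T \<le> potts_coeff r q (insert e T)"
    and "q * potts_coeff r q (insert e T) \<le> potts_coeff r q T"
proof -
  have "0 < potts_coeff r q T"
    using assms(1) by (simp add: potts_coeff_def)
  then show "potts_coeff r q T \<le> potts_coeff r q (insert e T)"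
    and "q * potts_coeff r q (insert e T) \<le> potts_coeff r q T"
    using assms by (auto simp: potts_coeff_insert field_simps)
qed

section \<open>The two-sum of two matroids\<close>

lemma min_submodular:
  fixes f h :: "'a set \<Rightarrow> nat"
  assumes "f (S \<union> T) + f (S \<inter> T) \<le> f S + f T" "h (S \<union> T) + h (S \<inter> T) \<le> h S + h T"
    and "f S \<le> h S + 1" "f T \<le> h T + 1"
    and "h S < f S \<or> h T < f T \<Longrightarrow> h (S \<union> T) + 1 = f (S \<union> T)"
  shows "min (f (S \<union> T)) (h (S \<union> T)) + min (f (S \<inter> T)) (h (S \<inter> T))
      \<le> min (f S) (h S) + min (f T) (h T)"
  using assms by (simp add: min_def) arith

locale two_sum =
  fixes A B :: "'a set" and g :: 'a and rL rM :: "'a set \<Rightarrow> nat"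
  assumes g_notin: "g \<notin> A" "g \<notin> B"
    and matroid_L: "matroid (insert g A) rL" and matroid_M: "matroid (insert g B) rM"
    and defined: "two_sum_defined (insert g A) rL (insert g B) rM g"
begin

abbreviation rN :: "'a set \<Rightarrow> nat" where
  "rN \<equiv> two_sum_rank (insert g A) rL (insert g B) rM g"

lemma finite_sides: "finite A" "finite B"
  using matroid_finite[OF matroid_L] matroid_finite[OF matroid_M] by simp_all

lemma disjoint_sides: "A \<inter> B = {}"
  using defined g_notin by (auto simp: two_sum_defined_def)

lemma ground_eq: "two_sum_ground (insert g A) (insert g B) g = A \<union> B"
  using g_notin by (auto simp: two_sum_ground_def)

lemma nonloop: "rL {g} \<noteq> 0" "rM {g} \<noteq> 0"
  using defined by (auto simp: two_sum_defined_def is_loop_def)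

lemma noncoloop: "rL A = rL (insert g A)" "rM B = rM (insert g B)"
proof -
  have "rL A \<le> rL (insert g A)" "rM B \<le> rM (insert g B)"
    by (auto intro: matroid_rank_mono[OF matroid_L] matroid_rank_mono[OF matroid_M])
  moreover have "insert g A - {g} = A" "insert g B - {g} = B"
    using g_notin by auto
  ultimately show "rL A = rL (insert g A)" "rM B = rM (insert g B)"
    using defined by (auto simp: two_sum_defined_def is_coloop_def)
qed

lemmas rank_insert_g_L = matroid_rank_insert_nonloop[OF matroid_L nonloop(1) g_notin(1)]
lemmas rank_insert_g_M = matroid_rank_insert_nonloop[OF matroid_M nonloop(2) g_notin(2)]

lemma card_split:
  assumes "S \<subseteq> A \<union> B"
  shows "card S = card (S \<inter> A) + card (S \<inter> B)"
proof -
  have "card (S \<inter> A \<union> S \<inter> B) = card (S \<inter> A) + card (S \<inter> B)"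
    using finite_sides disjoint_sides by (intro card_Un_disjoint) auto
  moreover have "S \<inter> A \<union> S \<inter> B = S"
    using assms by auto
  ultimately show ?thesis
    by simp
qed

lemma rank_eq:
  assumes "S \<subseteq> A \<union> B"
  shows "rN S = rL (S \<inter> A) + rM (S \<inter> B)
    - (if rL (insert g (S \<inter> A)) = rL (S \<inter> A) \<and> rM (insert g (S \<inter> B)) = rM (S \<inter> B) then 1 else 0)"
proof -
  have "S \<inter> insert g A = S \<inter> A" "S \<inter> insert g B = S \<inter> B"
    using assms g_notin by auto
  then show ?thesis
    by (simp add: two_sum_rank_def closure_m_def)
qed

lemma rank_ground: "rN (A \<union> B) = rL (insert g A) + rM (insert g B) - 1"
proof -
  have "(A \<union> B) \<inter> A = A" "(A \<union> B) \<inter> B = B"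
    using disjoint_sides by auto
  then show ?thesis
    using rank_eq[of "A \<union> B"] noncoloop by simp
qed

definition rank_without_g :: "'a set \<Rightarrow> nat" where
  "rank_without_g S = rL (S \<inter> A) + rM (S \<inter> B)"

definition rank_with_g :: "'a set \<Rightarrow> nat" where
  "rank_with_g S = rL (insert g (S \<inter> A)) + rM (insert g (S \<inter> B)) - 1"

lemma rank_with_g_less_iff:
  "rank_with_g S < rank_without_g S \<longleftrightarrow>
    rL (insert g (S \<inter> A)) = rL (S \<inter> A) \<and> rM (insert g (S \<inter> B)) = rM (S \<inter> B)"
  using rank_insert_g_L(1,2)[of "S \<inter> A"] rank_insert_g_M(1,2)[of "S \<inter> B"]
  by (auto simp: rank_with_g_def rank_without_g_def)

lemma rank_eq_min: "S \<subseteq> A \<union> B \<Longrightarrow> rN S = min (rank_without_g S) (rank_with_g S)"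
  using rank_eq[of S] rank_insert_g_L(1,2)[of "S \<inter> A"] rank_insert_g_M(1,2)[of "S \<inter> B"]
  by (auto simp: rank_with_g_def rank_without_g_def)

lemma Suc_rank_with_g: "Suc (rank_with_g S) = rL (insert g (S \<inter> A)) + rM (insert g (S \<inter> B))"
  using rank_insert_g_L(2)[of "S \<inter> A"] by (simp add: rank_with_g_def)

lemma rank_without_g_le: "rank_without_g S \<le> rank_with_g S + 1"
  using rank_insert_g_L(1,2)[of "S \<inter> A"] rank_insert_g_M(1,2)[of "S \<inter> B"]
  by (auto simp: rank_with_g_def rank_without_g_def)

lemma rank_with_g_less_mono:
  assumes "Z \<subseteq> U" "rank_with_g Z < rank_without_g Z"
  shows "rank_with_g U < rank_without_g U"
proof -
  have "rL (insert g (Z \<inter> A)) = rL (Z \<inter> A)" "rM (insert g (Z \<inter> B)) = rM (Z \<inter> B)"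
    using assms(2) rank_with_g_less_iff by blast+
  then have "rL (insert g (U \<inter> A)) = rL (U \<inter> A)" "rM (insert g (U \<inter> B)) = rM (U \<inter> B)"
    using assms(1)
    by (auto intro!: matroid_rank_insert_eq_mono[OF matroid_L, of "Z \<inter> A"]
        matroid_rank_insert_eq_mono[OF matroid_M, of "Z \<inter> B"])
  then show ?thesis
    using rank_with_g_less_iff by blast
qed

lemma rank_without_g_mono: "S \<subseteq> T \<Longrightarrow> rank_without_g S \<le> rank_without_g T"
  unfolding rank_without_g_def
  by (intro add_mono matroid_rank_mono[OF matroid_L] matroid_rank_mono[OF matroid_M]) auto

lemma rank_with_g_mono: "S \<subseteq> T \<Longrightarrow> rank_with_g S \<le> rank_with_g T"
  unfolding rank_with_g_def
  by (intro diff_le_mono add_mono matroid_rank_mono[OF matroid_L] matroid_rank_mono[OF matroid_M])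
    auto

lemma rank_without_g_submod:
  "rank_without_g (S \<union> T) + rank_without_g (S \<inter> T) \<le> rank_without_g S + rank_without_g T"
proof -
  have split: "(S \<union> T) \<inter> X = S \<inter> X \<union> T \<inter> X" "(S \<inter> T) \<inter> X = S \<inter> X \<inter> (T \<inter> X)" for X
    by auto
  have "rL (S \<inter> A \<union> T \<inter> A) + rL (S \<inter> A \<inter> (T \<inter> A)) \<le> rL (S \<inter> A) + rL (T \<inter> A)"
      "rM (S \<inter> B \<union> T \<inter> B) + rM (S \<inter> B \<inter> (T \<inter> B)) \<le> rM (S \<inter> B) + rM (T \<inter> B)"
    by (rule matroid_rank_submod[OF matroid_L] matroid_rank_submod[OF matroid_M]; blast)+
  then show ?thesis
    unfolding rank_without_g_def split by linarith
qed

lemma rank_with_g_submod: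
  "rank_with_g (S \<union> T) + rank_with_g (S \<inter> T) \<le> rank_with_g S + rank_with_g T"
proof -
  have split: "insert g ((S \<union> T) \<inter> X) = insert g (S \<inter> X) \<union> insert g (T \<inter> X)"
      "insert g ((S \<inter> T) \<inter> X) = insert g (S \<inter> X) \<inter> insert g (T \<inter> X)" for X
    by auto
  have "rL (insert g (S \<inter> A) \<union> insert g (T \<inter> A)) + rL (insert g (S \<inter> A) \<inter> insert g (T \<inter> A))
        \<le> rL (insert g (S \<inter> A)) + rL (insert g (T \<inter> A))"
      "rM (insert g (S \<inter> B) \<union> insert g (T \<inter> B)) + rM (insert g (S \<inter> B) \<inter> insert g (T \<inter> B))
        \<le> rM (insert g (S \<inter> B)) + rM (insert g (T \<inter> B))"
    by (rule matroid_rank_submod[OF matroid_L] matroid_rank_submod[OF matroid_M]; blast)+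
  then show ?thesis
    using Suc_rank_with_g[of S] Suc_rank_with_g[of T]
      Suc_rank_with_g[of "S \<union> T", unfolded split] Suc_rank_with_g[of "S \<inter> T", unfolded split]
    by linarith
qed

lemma rank_with_g_union_less:
  assumes "rank_with_g S < rank_without_g S \<or> rank_with_g T < rank_without_g T"
  shows "rank_with_g (S \<union> T) + 1 = rank_without_g (S \<union> T)"
proof -
  have "rank_with_g (S \<union> T) < rank_without_g (S \<union> T)"
    using assms rank_with_g_less_mono[of S "S \<union> T"] rank_with_g_less_mono[of T "S \<union> T"] by blast
  then show ?thesis
    using rank_without_g_le[of "S \<union> T"] by linarith
qed

lemma matroid_two_sum: "matroid (two_sum_ground (insert g A) (insert g B) g) rN"
proof -
  let ?r = "\<lambda>S. min (rank_without_g S) (rank_with_g S)"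
  have "matroid (A \<union> B) ?r"
    unfolding matroid_def
  proof (intro conjI allI impI)
    show "finite (A \<union> B)"
      using finite_sides by simp
    show "?r S \<le> card S" if "S \<subseteq> A \<union> B" for S
      using rank_insert_g_L(3)[of "S \<inter> A"] rank_insert_g_M(3)[of "S \<inter> B"] card_split[OF that]
      by (simp add: rank_without_g_def)
    show "?r S \<le> ?r T" if "S \<subseteq> T \<and> T \<subseteq> A \<union> B" for S T
      using that rank_without_g_mono[of S T] rank_with_g_mono[of S T] by linarith
    show "?r (S \<union> T) + ?r (S \<inter> T) \<le> ?r S + ?r T" for S T
      by (rule min_submodular[OF rank_without_g_submod rank_with_g_submod
            rank_without_g_le rank_without_g_le rank_with_g_union_less])
  qed
  then show ?thesis
    unfolding ground_eq by (rule matroid_cong) (rule rank_eq_min[symmetric])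
qed

lemma bases_two_sum_iff:
  assumes S: "S \<subseteq> A \<union> B"
  shows "S \<in> bases (A \<union> B) rN \<longleftrightarrow>
    S \<inter> A \<in> bases (insert g A) rL \<and> insert g (S \<inter> B) \<in> bases (insert g B) rM
    \<or> insert g (S \<inter> A) \<in> bases (insert g A) rL \<and> S \<inter> B \<in> bases (insert g B) rM"
proof -
  have "S \<inter> A \<subseteq> A" "S \<inter> B \<subseteq> B"
    by auto
  note L = rank_insert_g_L[OF this(1)] and M = rank_insert_g_M[OF this(2)]
  show ?thesis
    using S L(1-4) M(1-4) by (auto simp: bases_def rank_eq card_split rank_ground L(5) M(5))
qed

lemma indeps_two_sum_iff:
  assumes S: "S \<subseteq> A \<union> B"
  shows "S \<in> indeps (A \<union> B) rN \<longleftrightarrow>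
    S \<inter> A \<in> indeps (insert g A) rL \<and> insert g (S \<inter> B) \<in> indeps (insert g B) rM
    \<or> insert g (S \<inter> A) \<in> indeps (insert g A) rL \<and> S \<inter> B \<in> indeps (insert g B) rM"
proof -
  have "S \<inter> A \<subseteq> A" "S \<inter> B \<subseteq> B"
    by auto
  note L = rank_insert_g_L[OF this(1)] and M = rank_insert_g_M[OF this(2)]
  show ?thesis
    using S L(1-4) M(1-4) by (auto simp: indeps_def rank_eq card_split L(5) M(5))
qed

lemma spannings_two_sum_iff:
  assumes S: "S \<subseteq> A \<union> B"
  shows "S \<in> spannings (A \<union> B) rN \<longleftrightarrow>
    S \<inter> A \<in> spannings (insert g A) rL \<and> insert g (S \<inter> B) \<in> spannings (insert g B) rM
    \<or> insert g (S \<inter> A) \<in> spannings (insert g A) rL \<and> S \<inter> B \<in> spannings (insert g B) rM"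
proof -
  have "S \<inter> A \<subseteq> A" "S \<inter> B \<subseteq> B"
    by auto
  note L = rank_insert_g_L[OF this(1)] and M = rank_insert_g_M[OF this(2)]
  show ?thesis
    using S L(1-4) M(1-4) by (auto simp: spannings_def rank_eq rank_ground)
qed

lemma bases_coeff_two_sum:
  assumes "S \<subseteq> A \<union> B"
  shows "family_coeff (bases (A \<union> B) rN) S = two_sum_coeff A B g 1 0 0
    (family_coeff (bases (insert g A) rL)) (family_coeff (bases (insert g B) rM)) S"
proof -
  have "\<not> (S \<inter> A \<in> bases (insert g A) rL \<and> insert g (S \<inter> A) \<in> bases (insert g A) rL)"
    using rank_insert_g_L(5)[of "S \<inter> A"] by (auto simp: bases_def)
  then show ?thesis
    using bases_two_sum_iff[OF assms]
    by (auto simp: family_coeff_def two_sum_coeff_def two_sum_form_def)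
qed

lemma indeps_coeff_two_sum:
  assumes "S \<subseteq> A \<union> B"
  shows "family_coeff (indeps (A \<union> B) rN) S = two_sum_coeff A B g 1 0 1
    (family_coeff (indeps (insert g A) rL)) (family_coeff (indeps (insert g B) rM)) S"
proof -
  have "g \<notin> S \<inter> A" "g \<notin> S \<inter> B"
    using g_notin by auto
  then show ?thesis
    using indeps_two_sum_iff[OF assms]
      matroid_indeps_insertD[OF matroid_L] matroid_indeps_insertD[OF matroid_M]
    by (auto simp: family_coeff_def two_sum_coeff_def two_sum_form_def)
qed

lemma spannings_coeff_two_sum:
  assumes "S \<subseteq> A \<union> B"
  shows "family_coeff (spannings (A \<union> B) rN) S = two_sum_coeff A B g 1 1 0
    (family_coeff (spannings (insert g A) rL)) (family_coeff (spannings (insert g B) rM)) S"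
  using spannings_two_sum_iff[OF assms]
    matroid_spannings_insertI[OF matroid_L, of _ g] matroid_spannings_insertI[OF matroid_M, of _ g]
  by (auto simp: family_coeff_def two_sum_coeff_def two_sum_form_def)

lemma B_rayleigh_two_sum:
  assumes "B_rayleigh (insert g A) rL" "B_rayleigh (insert g B) rM"
  shows "B_rayleigh (two_sum_ground (insert g A) (insert g B) g) rN"
proof -
  let ?c = "two_sum_coeff A B g 1 0 0
    (family_coeff (bases (insert g A) rL)) (family_coeff (bases (insert g B) rM))"
  obtain S where S: "S \<in> bases (A \<union> B) rN"
    using matroid_bases_nonempty[OF matroid_two_sum] ground_eq by auto
  then have "S \<subseteq> A \<union> B"
    by (simp add: bases_def)
  moreover from this have "?c S \<noteq> 0"
    using S by (simp add: bases_coeff_two_sum[symmetric] family_coeff_def)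
  ultimately have "rayleigh (A \<union> B) ?c"
    using assms by (intro rayleigh_two_sum_coeff[OF finite_sides disjoint_sides g_notin])
      (auto simp: B_rayleigh_def family_coeff_nonneg)
  then show ?thesis
    using matroid_two_sum
    by (simp add: B_rayleigh_def ground_eq rayleigh_cong[OF bases_coeff_two_sum])
qed

lemma I_rayleigh_two_sum:
  assumes "I_rayleigh (insert g A) rL" "I_rayleigh (insert g B) rM"
  shows "I_rayleigh (two_sum_ground (insert g A) (insert g B) g) rN"
proof -
  let ?c = "two_sum_coeff A B g 1 0 1
    (family_coeff (indeps (insert g A) rL)) (family_coeff (indeps (insert g B) rM))"
  have "{} \<in> indeps (A \<union> B) rN"
    using matroid_rank_empty[OF matroid_two_sum] by (simp add: indeps_def)
  then have "?c {} \<noteq> 0"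
    by (simp add: indeps_coeff_two_sum[symmetric] family_coeff_def)
  then have "rayleigh (A \<union> B) ?c"
    using assms g_notin by (intro rayleigh_two_sum_coeff[OF finite_sides disjoint_sides g_notin])
      (auto simp: I_rayleigh_def family_coeff_nonneg
        intro!: indeps_coeff_insert_le[OF matroid_L] indeps_coeff_insert_le[OF matroid_M])
  then show ?thesis
    using matroid_two_sum
    by (simp add: I_rayleigh_def ground_eq rayleigh_cong[OF indeps_coeff_two_sum])
qed

lemma S_rayleigh_two_sum:
  assumes "S_rayleigh (insert g A) rL" "S_rayleigh (insert g B) rM"
  shows "S_rayleigh (two_sum_ground (insert g A) (insert g B) g) rN"
proof -
  let ?c = "two_sum_coeff A B g 1 1 0
    (family_coeff (spannings (insert g A) rL)) (family_coeff (spannings (insert g B) rM))"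
  have "A \<union> B \<in> spannings (A \<union> B) rN"
    by (simp add: spannings_def)
  then have "?c (A \<union> B) \<noteq> 0"
    by (simp add: spannings_coeff_two_sum[symmetric] family_coeff_def)
  then have "rayleigh (A \<union> B) ?c"
    using assms spannings_coeff_insert_ge[OF matroid_L] spannings_coeff_insert_ge[OF matroid_M]
    by (intro rayleigh_two_sum_coeff[OF finite_sides disjoint_sides g_notin])
      (auto simp: S_rayleigh_def family_coeff_nonneg)
  then show ?thesis
    using matroid_two_sum
    by (simp add: S_rayleigh_def ground_eq rayleigh_cong[OF spannings_coeff_two_sum])
qed

lemma potts_coeff_two_sum:
  assumes q: "0 < q" "q < 1" and S: "S \<subseteq> A \<union> B"
  shows "potts_coeff rN q S
    = two_sum_coeff A B g (q / (1 - q)) 1 q (potts_coeff rL q) (potts_coeff rM q) S"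
proof -
  define a b where "a \<longleftrightarrow> rL (insert g (S \<inter> A)) = rL (S \<inter> A)"
    and "b \<longleftrightarrow> rM (insert g (S \<inter> B)) = rM (S \<inter> B)"
  define \<epsilon>L \<epsilon>M :: real where "\<epsilon>L = (if a then 1 else 1 / q)" and "\<epsilon>M = (if b then 1 else 1 / q)"
  define x y where "x = rL (S \<inter> A)" and "y = rM (S \<inter> B)"
  have insert_g: "potts_coeff rL q (insert g (S \<inter> A)) = potts_coeff rL q (S \<inter> A) * \<epsilon>L"
      "potts_coeff rM q (insert g (S \<inter> B)) = potts_coeff rM q (S \<inter> B) * \<epsilon>M"
    using potts_coeff_insert[OF q(1) rank_insert_g_L(1)[of "S \<inter> A"]]
      potts_coeff_insert[OF q(1) rank_insert_g_M(1)[of "S \<inter> B"]]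
    unfolding a_def b_def \<epsilon>L_def \<epsilon>M_def by simp_all
  have N: "potts_coeff rN q S = q powr - real x * q powr - real y * (if a \<and> b then q else 1)"
  proof (cases "a \<and> b")
    case True
    then have "1 \<le> x"
      using rank_insert_g_L(2)[of "S \<inter> A"] by (simp add: a_def x_def)
    then have "- real (x + y - 1) = - real x + - real y + 1"
      by simp
    then have "q powr - real (x + y - 1) = q powr - real x * q powr - real y * q powr 1"
      by (simp only: powr_add)
    then show ?thesis
      using True q(1) by (simp add: rank_eq[OF S, folded a_def b_def x_def y_def] potts_coeff_def)
  next
    case False
    have "q powr - real (x + y) = q powr - real x * q powr - real y"
      by (simp only: of_nat_add minus_add_distrib powr_add)
    then show ?thesis
      using False by (auto simp: rank_eq[OF S, folded a_def b_def x_def y_def] potts_coeff_def)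
  qed
  define k where "k = q / (1 - q)"
  have "(if a \<and> b then q else 1) = k * (\<epsilon>M + \<epsilon>L - 1 - q * (\<epsilon>L * \<epsilon>M))"
    using q by (cases a; cases b) (simp_all add: k_def \<epsilon>L_def \<epsilon>M_def field_simps)
  then show ?thesis
    unfolding k_def[symmetric] N two_sum_coeff_def two_sum_form_def insert_g
    by (simp only:) (simp add: algebra_simps potts_coeff_def x_def y_def)
qed

lemma rayleigh_potts_two_sum:
  assumes q: "0 < q" "q < 1"
    and "rayleigh (insert g A) (potts_coeff rL q)" "rayleigh (insert g B) (potts_coeff rM q)"
  shows "rayleigh (A \<union> B) (potts_coeff rN q)"
proof -
  let ?c = "two_sum_coeff A B g (q / (1 - q)) 1 q (potts_coeff rL q) (potts_coeff rM q)"
  have "potts_coeff rN q {} \<noteq> 0"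
    using q(1) by (simp add: potts_coeff_def)
  then have "?c {} \<noteq> 0"
    by (simp add: potts_coeff_two_sum[OF q, symmetric])
  then have "rayleigh (A \<union> B) ?c"
    using assms
    by (intro rayleigh_two_sum_coeff[OF finite_sides disjoint_sides g_notin])
      (auto intro!: potts_coeff_insert_bounds[OF q(1)] rank_insert_g_L(1) rank_insert_g_M(1))
  then show ?thesis
    by (simp add: rayleigh_cong[OF potts_coeff_two_sum[OF q]])
qed

lemma potts_rayleigh_two_sum:
  assumes "potts_rayleigh (insert g A) rL" "potts_rayleigh (insert g B) rM"
  shows "potts_rayleigh (two_sum_ground (insert g A) (insert g B) g) rN"
proof -
  obtain qL where qL: "0 < qL" "\<And>q. 0 < q \<Longrightarrow> q \<le> qL \<Longrightarrow> rayleigh (insert g A) (potts_coeff rL q)"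
    using assms(1) unfolding potts_rayleigh_def by blast
  obtain qM where qM: "0 < qM" "\<And>q. 0 < q \<Longrightarrow> q \<le> qM \<Longrightarrow> rayleigh (insert g B) (potts_coeff rM q)"
    using assms(2) unfolding potts_rayleigh_def by blast
  define qN :: real where "qN = min (min qL qM) (1 / 2)"
  have "0 < qN"
    using qL qM by (simp add: qN_def)
  moreover have "rayleigh (A \<union> B) (potts_coeff rN q)" if "0 < q" "q \<le> qN" for q
    using that by (intro rayleigh_potts_two_sum qL qM) (simp_all add: qN_def)
  ultimately show ?thesis
    using matroid_two_sum unfolding potts_rayleigh_def ground_eq by blast
qed

end

theorem theorem5p8:
  fixes EL EM :: "'a set" and rL rM :: "'a set \<Rightarrow> nat" and g :: 'a
  assumes "two_sum_defined EL rL EM rM g"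
  shows "(B_rayleigh EL rL \<and> B_rayleigh EM rM \<longrightarrow>
            B_rayleigh (two_sum_ground EL EM g) (two_sum_rank EL rL EM rM g))
       \<and> (I_rayleigh EL rL \<and> I_rayleigh EM rM \<longrightarrow>
            I_rayleigh (two_sum_ground EL EM g) (two_sum_rank EL rL EM rM g))
       \<and> (S_rayleigh EL rL \<and> S_rayleigh EM rM \<longrightarrow>
            S_rayleigh (two_sum_ground EL EM g) (two_sum_rank EL rL EM rM g))
       \<and> (potts_rayleigh EL rL \<and> potts_rayleigh EM rM \<longrightarrow>
            potts_rayleigh (two_sum_ground EL EM g) (two_sum_rank EL rL EM rM g))"
proof -
  have "g \<in> EL" "g \<in> EM"
    using assms by (auto simp: two_sum_defined_def)
  then obtain A B where EL: "EL = insert g A" "g \<notin> A" and EM: "EM = insert g B" "g \<notin> B"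
    by (meson mk_disjoint_insert)
  have two_sum_AB: "two_sum A B g rL rM" if "matroid EL rL" "matroid EM rM"
    using that assms EL EM by unfold_locales simp_all
  have class_matroid: "matroid E r"
    if "B_rayleigh E r \<or> I_rayleigh E r \<or> S_rayleigh E r \<or> potts_rayleigh E r" for E r
    using that by (auto simp: B_rayleigh_def I_rayleigh_def S_rayleigh_def potts_rayleigh_def)
  show ?thesis
    using two_sum.B_rayleigh_two_sum[OF two_sum_AB] two_sum.I_rayleigh_two_sum[OF two_sum_AB]
      two_sum.S_rayleigh_two_sum[OF two_sum_AB] two_sum.potts_rayleigh_two_sum[OF two_sum_AB]
      class_matroid
    unfolding EL EM by blast
qed

end
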